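(* Under condition $\mathcal D'_{q_n}$, for every $\tau>0$, $$\lim_{n\to\infty}k_n\mathbb P(\mathscr W^c_{r_n}(U_n(\tau)))=\theta\tau\qquad\text{and}\qquad\lim_{n\to\infty}\frac{\mathbb P(\mathscr W^c_{r_n}(U_n(\tau)))}{r_n\mathbb P(U_n(\tau))}=\theta.$$
   Context: $\mathbf X_0,\mathbf X_1,\dots$ stationary in $\mathbb R^d$, coordinate process with shift $\sigma$. Thresholds $u_n$ nonincreasing, left-continuous, $\lim_{\tau_1\to0,\tau_2\to\infty}\mathbb P(u_n(\tau_2)<\|\mathbf X_0\|<u_n(\tau_1))=1$, $n\mathbb P(\|\mathbf X_0\|>u_n(\tau))\to\tau$; $u_n^{-1}(z)=\sup\{\tau>0:z\le u_n(\tau)\}$. Sequences $k_n,t_n\to\infty$, $r_n=\lfloor n/k_n\rfloor\to\infty$, $k_nt_n=o(n)$, $q_n=o(r_n)$. $U_n(\tau)=\{\|\mathbf X_0\|>u_n(\tau)\}$, $U_n^{(q_n)}(\tau)=U_n(\tau)\cap\bigcap_{i=1}^{q_n}\{\|\mathbf X_i\|\le u_n(\tau)\}$; $\mathscr W^c_{r}(U_n(\tau))=\bigcup_{i=0}^{r-1}\sigma^{-i}(U_n(\tau))=\{\max_{0\le i<r}\|\mathbf X_i\|>u_n(\tau)\}$. Standing assumption (extremal index): $\theta=\lim_n\mathbb P(U_n^{(q_n)}(\tau))/\mathbb P(U_n(\tau))$ exists for all $\tau>0$. Condition $\mathcal D'_{q_n}$: for every set $A_1=\{(x_j):x_j\in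 H_j,\ j=0,\dots,m\}$ ($H_j$ Borel), with $A_{n,1}=\{(u_n^{-1}(\|\mathbf X_j\|)\mathbf X_j/\|\mathbf X_j\|)_{j\ge0}\in A_1\}$, $A^{(q)}=A\cap\bigcap_{i=1}^q\sigma^{-i}(A^c)$, $\mathscr W^c_{[a,b)}(A)=\bigcup_{a\le i<b}\sigma^{-i}(A)$: $\lim_nn\mathbb P(A^{(q_n)}_{n,1}\cap\mathscr W^c_{[q_n+1,r_n)}(A_{n,1}))=0$. *)

theory Defs
  imports "HOL-Probability.Probability" "HOL-Library.Landau_Symbols"
begin

text \<open>Coordinate process on the sequence space (nat => 'a); X_i(w) = w i.\<close>

definition shift :: "(nat \<Rightarrow> 'a) \<Rightarrow> nat \<Rightarrow> 'a" where
  "shift w = (\<lambda>i. w (Suc i))"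

text \<open>Generalised inverse u^{-1}(z) = sup {t > 0. z <= u(t)} (computed in the extended
  reals; the value +infinity and sup of the empty set are sent to 0).\<close>
definition uinv :: "(real \<Rightarrow> real) \<Rightarrow> real \<Rightarrow> real" where
  "uinv v z = real_of_ereal (Sup (ereal ` {t. 0 < t \<and> z \<le> v t}))"

definition exceed :: "real \<Rightarrow> (nat \<Rightarrow> 'a::real_normed_vector) set" where
  "exceed x = {w. x < norm (w 0)}"

definition exceed_q :: "real \<Rightarrow> nat \<Rightarrow> (nat \<Rightarrow> 'a::real_normed_vector) set" where
  "exceed_q x q = exceed x \<inter> (\<Inter>i\<in>{1..q}. {w. norm (w i) \<le> x})"

definition Wmax :: "nat \<Rightarrow> real \<Rightarrow> (nat \<Rightarrow> 'a::real_normed_vector) set" where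
  "Wmax r x = {w. \<exists>i<r. x < norm (w i)}"

definition Aq :: "(nat \<Rightarrow> 'a) set \<Rightarrow> nat \<Rightarrow> (nat \<Rightarrow> 'a) set" where
  "Aq A q = A \<inter> (\<Inter>i\<in>{1..q}. (shift ^^ i) -` (- A))"

definition Wint :: "nat \<Rightarrow> nat \<Rightarrow> (nat \<Rightarrow> 'a) set \<Rightarrow> (nat \<Rightarrow> 'a) set" where
  "Wint a b A = (\<Union>i\<in>{a..<b}. (shift ^^ i) -` A)"

definition normalise :: "(real \<Rightarrow> real) \<Rightarrow> 'a::real_normed_vector \<Rightarrow> 'a" where
  "normalise v x = (uinv v (norm x) / norm x) *\<^sub>R x"

definition An1 :: "(real \<Rightarrow> real) \<Rightarrow> nat \<Rightarrow> (nat \<Rightarrow> 'a::real_normed_vector set)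
    \<Rightarrow> (nat \<Rightarrow> 'a) set" where
  "An1 v m H = {w. \<forall>j\<le>m. normalise v (w j) \<in> H j}"

definition cond_D' :: "(nat \<Rightarrow> 'a::euclidean_space) measure \<Rightarrow> (nat \<Rightarrow> real \<Rightarrow> real)
    \<Rightarrow> (nat \<Rightarrow> nat) \<Rightarrow> (nat \<Rightarrow> nat) \<Rightarrow> bool" where
  "cond_D' M u q r \<longleftrightarrow>
     (\<forall>(m::nat) (H :: nat \<Rightarrow> 'a set). (\<forall>j\<le>m. H j \<in> sets borel) \<longrightarrow>
        (\<lambda>n. real n * measure M (Aq (An1 (u n) m H) (q n) \<inter>
                                 Wint (q n + 1) (r n) (An1 (u n) m H))) \<longlonglongrightarrow> 0)"

end

(*
  By stationarity, P(max_{i<r} |X_i| > u) is the sum over m < r of P(U^{(m)}), the probability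
  that X_0 exceeds u and X_1, ..., X_m do not.  For m >= q such a term differs from P(U^{(q)}) by
  at most P(U^{(q)} \<inter> W_{[q+1,r)}(U)), and each of the first q terms is at most P(U); hence
  |P(W_r(U)) - r P(U^{(q)})| <= q P(U) + r P(U^{(q)} \<inter> W_{[q+1,r)}(U)).
  Almost surely |X_i| > u_n(tau) holds iff the normalised X_i lies in {0 < |x| < tau}
  (monotonicity and left continuity of u_n, and the mass condition, enter here), so D'_{q_n}
  for this set makes the last probability o(1/n).  Since k_n r_n ~ n, q_n = o(r_n),
  n P(U) -> tau and P(U^{(q)}) / P(U) -> theta, both limits follow.
*)

theory Submission
  imports Defs
begin

lemma funpow_shift_apply: "(shift ^^ i) w j = w (j + i)"
  by (induction i arbitrary: w j) (auto simp: shift_def)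

lemma Aq_exceed: "Aq (exceed x) q = exceed_q x q"
  by (auto simp: Aq_def exceed_q_def exceed_def funpow_shift_apply not_less)

lemma Sup_uinv_antimono:
  fixes v :: "real \<Rightarrow> real"
  shows "z \<le> z' \<Longrightarrow> Sup (ereal ` {t. 0 < t \<and> z' \<le> v t}) \<le> Sup (ereal ` {t. 0 < t \<and> z \<le> v t})"
  by (intro Sup_subset_mono image_mono) (auto intro: order_trans)

lemma uinv_nonneg: "0 \<le> uinv v z"
proof (cases "\<exists>t>0. z \<le> v t")
  case True
  then obtain t where "0 < t" "z \<le> v t" by blast
  then have "ereal t \<le> Sup (ereal ` {t. 0 < t \<and> z \<le> v t})"
    by (intro Sup_upper) auto
  with \<open>0 < t\<close> show ?thesis
    unfolding uinv_def by (intro real_of_ereal_pos) (simp add: order_trans[rotated])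
next
  case False
  then have empty: "{t. 0 < t \<and> z \<le> v t} = {}" by auto
  show ?thesis unfolding uinv_def empty by (simp add: bot_ereal_def)
qed

lemma borel_measurable_uinv[measurable]: "uinv v \<in> borel_measurable borel"
proof -
  define G where "G z = Sup (ereal ` {t. 0 < t \<and> z \<le> v t})" for z
  have "G \<in> borel_measurable borel"
  proof (rule borel_measurableI_le)
    fix y
    have "is_interval {z. G z \<le> y}"
      unfolding is_interval_1 G_def using Sup_uinv_antimono order_trans by blast
    then show "{z \<in> space borel. G z \<le> y} \<in> sets borel"
      by (simp add: real_interval_borel_measurable)
  qed
  then show ?thesis
    unfolding uinv_def[abs_def] G_def[symmetric] by measurable
qed

lemma borel_measurable_normalise[measurable]:
  "normalise v \<in> borel_measurable (borel :: 'a::euclidean_space measure)"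
  unfolding normalise_def[abs_def] by measurable

lemma norm_normalise: "norm (normalise v x) = (if x = 0 then 0 else uinv v (norm x))"
  by (simp add: normalise_def uinv_nonneg)

lemma uinv_less:
  fixes v :: "real \<Rightarrow> real"
  assumes anti: "antimono_on {0<..} v" and left_cont: "continuous (at_left \<tau>) v"
    and "0 < \<tau>" "v \<tau> < z" "0 < s" "z \<le> v s"
  shows "0 < uinv v z \<and> uinv v z < \<tau>"
proof -
  define S where "S = {t. 0 < t \<and> z \<le> v t}"
  have below_\<tau>: "t < \<tau>" if "t \<in> S" for t
  proof (rule ccontr)
    assume "\<not> t < \<tau>"
    then have "v t \<le> v \<tau>" using monotone_onD[OF anti, of \<tau> t] \<open>0 < \<tau>\<close> by simp
    then show False using that \<open>v \<tau> < z\<close> by (auto simp: S_def)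
  qed
  have "Sup (ereal ` S) \<le> ereal \<tau>"
    by (intro Sup_least) (auto dest: below_\<tau>)
  moreover have "ereal s \<le> Sup (ereal ` S)"
    using \<open>0 < s\<close> \<open>z \<le> v s\<close> by (intro Sup_upper) (auto simp: S_def)
  moreover have "Sup (ereal ` S) \<noteq> ereal \<tau>" \<comment> \<open>by left continuity of \<open>v\<close> at \<open>\<tau>\<close>\<close>
  proof
    assume Sup_eq: "Sup (ereal ` S) = ereal \<tau>"
    have "z \<le> v t" if "0 < t" "t < \<tau>" for t
    proof -
      have "ereal t < Sup (ereal ` S)" using Sup_eq that by simp
      then obtain t' where "t' \<in> S" "t < t'" by (auto simp: less_Sup_iff)
      then show ?thesis using anti that by (auto simp: S_def dest!: monotone_onD[of _ _ _ _ t t'])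
    qed
    then have "eventually (\<lambda>t. z \<le> v t) (at_left \<tau>)"
      using eventually_at_left_real[OF \<open>0 < \<tau>\<close>] by (auto elim!: eventually_mono)
    with left_cont have "z \<le> v \<tau>"
      by (intro tendsto_lowerbound[of v]) (auto simp: continuous_within)
    with \<open>v \<tau> < z\<close> show False by simp
  qed
  ultimately obtain r where "Sup (ereal ` S) = ereal r" "s \<le> r" "r < \<tau>"
    by (cases "Sup (ereal ` S)") auto
  with \<open>0 < s\<close> show ?thesis by (simp add: uinv_def S_def[symmetric])
qed

lemma uinv_ge:
  fixes v :: "real \<Rightarrow> real"
  assumes anti: "antimono_on {0<..} v"
    and "0 < \<tau>" "z \<le> v \<tau>" "0 < b" "v b < z"
  shows "\<tau> \<le> uinv v z"
proof -
  define S where "S = {t. 0 < t \<and> z \<le> v t}"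
  have "t \<le> b" if "t \<in> S" for t
  proof (rule ccontr)
    assume "\<not> t \<le> b"
    then have "v t \<le> v b" using monotone_onD[OF anti, of b t] \<open>0 < b\<close> by simp
    then show False using that \<open>v b < z\<close> by (auto simp: S_def)
  qed
  then have "Sup (ereal ` S) \<le> ereal b"
    by (intro Sup_least) auto
  moreover have "ereal \<tau> \<le> Sup (ereal ` S)"
    using \<open>0 < \<tau>\<close> \<open>z \<le> v \<tau>\<close> by (intro Sup_upper) (auto simp: S_def)
  ultimately obtain r where "Sup (ereal ` S) = ereal r" "\<tau> \<le> r"
    by (cases "Sup (ereal ` S)") auto
  then show ?thesis by (simp add: uinv_def S_def[symmetric])
qed

text \<open>The hypothesis \<open>0 \<le> v \<tau>\<close> rules out an exceedance by \<open>x = 0\<close>, which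
  \<^const>\<open>normalise\<close> maps to \<open>0\<close> whatever \<open>v\<close> is.\<close>

lemma exceeds_iff_norm_normalise:
  fixes v :: "real \<Rightarrow> real" and x :: "'a::real_normed_vector"
  assumes anti: "antimono_on {0<..} v" and left_cont: "continuous (at_left \<tau>) v"
    and "0 < \<tau>" "0 \<le> v \<tau>"
    and "0 < s1" "norm x \<le> v s1" "0 < s2" "v s2 < norm x"
  shows "v \<tau> < norm x \<longleftrightarrow> 0 < norm (normalise v x) \<and> norm (normalise v x) < \<tau>"
proof (cases "v \<tau> < norm x")
  case True
  with \<open>0 \<le> v \<tau>\<close> have "x \<noteq> 0" by auto
  with True uinv_less[OF anti left_cont \<open>0 < \<tau>\<close> True \<open>0 < s1\<close> \<open>norm x \<le> v s1\<close>]
  show ?thesis by (simp add: norm_normalise)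
next
  case False
  then have "x = 0 \<or> \<tau> \<le> uinv v (norm x)"
    using uinv_ge[OF anti \<open>0 < \<tau>\<close> _ \<open>0 < s2\<close> \<open>v s2 < norm x\<close>] by force
  with False show ?thesis by (auto simp: norm_normalise)
qed

lemma exceed_q_antimono: "q \<le> m \<Longrightarrow> exceed_q x m \<subseteq> exceed_q x q"
  by (auto simp: exceed_q_def)

lemma exceed_q_subset_Un_gap:
  assumes "q \<le> m" "m < r"
  shows "exceed_q x q \<subseteq> exceed_q x m \<union> (Aq (exceed x) q \<inter> Wint (q + 1) r (exceed x))"
proof
  fix w :: "nat \<Rightarrow> 'a" assume w: "w \<in> exceed_q x q"
  show "w \<in> exceed_q x m \<union> (Aq (exceed x) q \<inter> Wint (q + 1) r (exceed x))"
  proof (cases "w \<in> exceed_q x m")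
    case False
    then obtain i where "i \<in> {1..m}" "x < norm (w i)"
      using w by (auto simp: exceed_q_def exceed_def not_le)
    moreover from this have "i \<notin> {1..q}"
      using w by (force simp: exceed_q_def)
    ultimately have "w \<in> Wint (q + 1) r (exceed x)"
      using assms by (auto simp: Wint_def exceed_def funpow_shift_apply)
    then show ?thesis using w by (simp add: Aq_exceed)
  qed simp
qed

locale stationary_process = prob_space M for M :: "(nat \<Rightarrow> 'a::euclidean_space) measure" +
  assumes sets_M: "sets M = sets (\<Pi>\<^sub>M i\<in>(UNIV::nat set). (borel :: 'a measure))"
    and stationary: "\<forall>A\<in>sets M. measure M (shift -` A \<inter> space M) = measure M A"
begin

lemma space_eq: "space M = UNIV"
  using sets_eq_imp_space_eq[OF sets_M] by (simp add: space_PiM)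

lemma measurable_coordinate[measurable]: "(\<lambda>w. w i) \<in> borel_measurable M"
  using measurable_component_singleton[of i UNIV "\<lambda>_. borel"]
  by (simp add: measurable_cong_sets[OF sets_M refl])

lemma measurable_shift[measurable]: "shift \<in> M \<rightarrow>\<^sub>M M"
proof -
  have "(\<lambda>w i. w (Suc i)) \<in> M \<rightarrow>\<^sub>M (\<Pi>\<^sub>M i\<in>(UNIV::nat set). (borel :: 'a measure))"
    by (rule measurable_PiM_single') (auto simp: space_eq)
  then show ?thesis
    unfolding shift_def[abs_def] by (simp add: measurable_cong_sets[OF refl sets_M])
qed

lemma sets_Collect_pred: "Measurable.pred M P \<Longrightarrow> {w. P w} \<in> sets M"
  by (simp add: Measurable.pred_def space_eq)

lemma sets_vimage_shift_pow: "A \<in> sets M \<Longrightarrow> (shift ^^ i) -` A \<in> sets M"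
  using measurable_sets[of "shift ^^ i" M M A] by (simp add: space_eq)

lemma measure_vimage_shift_pow: "A \<in> sets M \<Longrightarrow> measure M ((shift ^^ i) -` A) = measure M A"
proof (induction i arbitrary: A)
  case (Suc i)
  have "shift -` A \<in> sets M"
    using sets_vimage_shift_pow[OF Suc.prems, of 1] by simp
  have "measure M ((shift ^^ Suc i) -` A) = measure M ((shift ^^ i) -` (shift -` A))"
    by (simp only: funpow.simps(2) vimage_comp)
  also have "\<dots> = measure M (shift -` A)"
    using Suc.IH[OF \<open>shift -` A \<in> sets M\<close>] .
  also have "\<dots> = measure M A"
    using stationary Suc.prems by (simp add: space_eq)
  finally show ?case .
qed simp

lemma sets_exceed: "exceed x \<in> sets M"
  unfolding exceed_def by (intro sets_Collect_pred) measurable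

lemma sets_exceed_q: "exceed_q x q \<in> sets M"
proof -
  have "exceed_q x q = {w. x < norm (w 0) \<and> (\<forall>i\<in>{1..q}. norm (w i) \<le> x)}"
    by (auto simp: exceed_q_def exceed_def)
  also have "\<dots> \<in> sets M" by (intro sets_Collect_pred) measurable
  finally show ?thesis .
qed

lemma sets_Wmax: "Wmax r x \<in> sets M"
proof -
  have "Wmax r x = {w. \<exists>i\<in>{..<r}. x < norm (w i)}" by (auto simp: Wmax_def)
  also have "\<dots> \<in> sets M" by (intro sets_Collect_pred) measurable
  finally show ?thesis .
qed

lemma sets_An1:
  assumes "\<And>j. j \<le> m \<Longrightarrow> H j \<in> sets borel"
  shows "An1 v m H \<in> sets M"
proof -
  have "(\<lambda>w. normalise v (w j)) \<in> borel_measurable M" for j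
    by measurable
  then have "(\<lambda>w. normalise v (w j)) -` H j \<inter> space M \<in> sets M" if "j \<le> m" for j
    using assms[OF that] by (rule measurable_sets)
  then have "(\<Inter>j\<in>{..m}. (\<lambda>w. normalise v (w j)) -` H j \<inter> space M) \<in> sets M"
    by (intro sets.finite_INT) auto
  moreover have "An1 v m H = (\<Inter>j\<in>{..m}. (\<lambda>w. normalise v (w j)) -` H j \<inter> space M)"
    by (auto simp: An1_def space_eq)
  ultimately show ?thesis by simp
qed

lemma sets_Aq_Wint:
  assumes "A \<in> sets M"
  shows "Aq A q \<inter> Wint a b A \<in> sets M"
proof -
  have "Aq A q = A - (\<Union>i\<in>{1..q}. (shift ^^ i) -` A)" by (auto simp: Aq_def)
  moreover have "(\<Union>i\<in>I. (shift ^^ i) -` A) \<in> sets M" if "finite I" for I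
    using that assms by (intro sets.finite_UN sets_vimage_shift_pow)
  ultimately show ?thesis
    unfolding Wint_def using assms by (intro sets.Int sets.Diff) auto
qed

text \<open>Decomposition by the first exceedance: by stationarity, a first exceedance at \<open>j\<close>
  has probability \<open>P(exceed_q x (r - 1 - j))\<close>.\<close>

lemma measure_Wmax_eq_sum: "measure M (Wmax r x) = (\<Sum>m<r. measure M (exceed_q x m))"
proof (induction r)
  case 0
  then show ?case by (simp add: Wmax_def)
next
  case (Suc r)
  have split: "Wmax (Suc r) x = exceed_q x r \<union> shift -` (Wmax r x :: (nat \<Rightarrow> 'a) set)"
  proof (intro equalityI subsetI)
    fix w :: "nat \<Rightarrow> 'a" assume "w \<in> Wmax (Suc r) x"
    then obtain i where i: "i < Suc r" "x < norm (w i)" by (auto simp: Wmax_def)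
    show "w \<in> exceed_q x r \<union> shift -` Wmax r x"
    proof (cases "w \<in> exceed_q x r")
      case False
      obtain j where "j < Suc r" "0 < j" "x < norm (w j)"
      proof (cases "i = 0")
        case True
        with i False obtain j where "j \<in> {1..r}" "x < norm (w j)"
          by (auto simp: exceed_q_def exceed_def not_le)
        then show thesis by (intro that[of j]) auto
      qed (use i in blast)
      then show ?thesis
        by (auto simp: Wmax_def shift_def intro!: exI[of _ "j - 1"])
    qed simp
  qed (auto simp: Wmax_def exceed_q_def exceed_def shift_def)
  have "\<not> x < norm (w (Suc i))" if "w \<in> exceed_q x r" "i < r" for w :: "nat \<Rightarrow> 'a" and i
    using that by (auto simp: exceed_q_def dest!: bspec[where x = "Suc i"])
  then have disjoint: "exceed_q x r \<inter> shift -` (Wmax r x :: (nat \<Rightarrow> 'a) set) = {}"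
    by (auto simp: Wmax_def shift_def)
  have "shift -` Wmax r x \<in> sets M"
    using sets_vimage_shift_pow[OF sets_Wmax, of 1] by simp
  then have "measure M (Wmax (Suc r) x) = measure M (exceed_q x r) + measure M (shift -` Wmax r x)"
    unfolding split by (intro finite_measure_Union sets_exceed_q disjoint)
  also have "measure M (shift -` Wmax r x) = measure M (Wmax r x)"
    using stationary sets_Wmax by (simp add: space_eq)
  finally show ?case using Suc.IH by simp
qed

lemma Wmax_block_bound:
  "\<bar>measure M (Wmax r x) - real r * measure M (exceed_q x q)\<bar>
     \<le> real q * measure M (exceed x) + real r * measure M (Aq (exceed x) q \<inter> Wint (q + 1) r (exceed x))"
proof -
  define Q where "Q = measure M (exceed_q x q)"
  define U where "U = measure M (exceed x)"
  define D where "D = measure M (Aq (exceed x) q \<inter> Wint (q + 1) r (exceed x))"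
  have "D \<ge> 0" by (simp add: D_def)
  have le_U: "measure M (exceed_q x m) \<le> U" for m
    unfolding U_def by (intro finite_measure_mono sets_exceed) (auto simp: exceed_q_def)
  have term_bound: "\<bar>measure M (exceed_q x m) - Q\<bar> \<le> (if m < q then U else 0) + D" if "m < r" for m
  proof (cases "m < q")
    case True
    then show ?thesis
      using le_U[of m] le_U[of q] \<open>D \<ge> 0\<close> measure_nonneg[of M "exceed_q x m"]
        measure_nonneg[of M "exceed_q x q"]
      unfolding Q_def abs_le_iff if_P[OF True] by linarith
  next
    case False
    have "measure M (exceed_q x m) \<le> Q"
      unfolding Q_def using False by (intro finite_measure_mono exceed_q_antimono sets_exceed_q) simp
    moreover have "Q \<le> measure M (exceed_q x m) + D"
    proof -
      have "Q \<le> measure M (exceed_q x m \<union> (Aq (exceed x) q \<inter> Wint (q + 1) r (exceed x)))"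
        unfolding Q_def using False \<open>m < r\<close>
        by (intro finite_measure_mono exceed_q_subset_Un_gap sets.Un sets_exceed_q
            sets_Aq_Wint sets_exceed) simp_all
      also have "\<dots> \<le> measure M (exceed_q x m) + D"
        unfolding D_def by (intro measure_Un_le sets_exceed_q sets_Aq_Wint sets_exceed)
      finally show ?thesis .
    qed
    ultimately show ?thesis using False by simp
  qed
  have "\<bar>measure M (Wmax r x) - real r * Q\<bar> = \<bar>\<Sum>m<r. measure M (exceed_q x m) - Q\<bar>"
    by (simp add: measure_Wmax_eq_sum sum_subtractf)
  also have "\<dots> \<le> (\<Sum>m<r. \<bar>measure M (exceed_q x m) - Q\<bar>)"
    by (rule sum_abs)
  also have "\<dots> \<le> (\<Sum>m<r. (if m < q then U else 0) + D)"
    by (intro sum_mono term_bound) simp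
  also have "\<dots> = real (card ({..<r} \<inter> {m. m < q})) * U + real r * D"
    by (simp add: sum.distrib sum.If_cases)
  also have "\<dots> \<le> real q * U + real r * D"
    using card_mono[of "{..<q}" "{..<r} \<inter> {m. m < q}"]
    by (intro add_right_mono mult_right_mono) (auto simp: U_def)
  finally show ?thesis unfolding Q_def U_def D_def .
qed

lemma AE_all_coordinates:
  assumes "{w. P (w 0)} \<in> sets M" "AE w in M. P (w 0)"
  shows "AE w in M. \<forall>i. P (w i)"
proof -
  have "AE w in M. P (w i)" for i
  proof -
    have "prob {w. P (w 0)} = 1"
      using assms by (simp add: AE_in_set_eq_1[symmetric])
    moreover have "(shift ^^ i) -` {w. P (w 0)} = {w. P (w i)}"
      by (auto simp: funpow_shift_apply)
    ultimately have "prob {w. P (w i)} = 1"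
      using measure_vimage_shift_pow[OF assms(1), of i] by simp
    then show ?thesis by (auto dest: AE_prob_1)
  qed
  then show ?thesis by (simp add: AE_all_countable)
qed

lemma AE_norm_between:
  fixes v :: "real \<Rightarrow> real"
  assumes full: "((\<lambda>(s1, s2). measure M {w. v s2 < norm (w 0) \<and> norm (w 0) < v s1}) \<longlongrightarrow> 1)
                  (at_right 0 \<times>\<^sub>F at_top)"
  shows "AE w in M. \<exists>s1>0. \<exists>s2>0. v s2 < norm (w 0) \<and> norm (w 0) < v s1"
proof -
  define E where "E j = {w :: nat \<Rightarrow> 'a. v (real (Suc j)) < norm (w 0) \<and> norm (w 0) < v (inverse (real (Suc j)))}"
    for j
  have E_sets: "E j \<in> sets M" for j
    unfolding E_def by (intro sets_Collect_pred) measurable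
  have "LIM j sequentially. real (Suc j) :> at_top"
    using filterlim_compose[OF filterlim_real_sequentially filterlim_Suc] by simp
  then have "LIM j sequentially. (inverse (real (Suc j)), real (Suc j)) :> at_right 0 \<times>\<^sub>F at_top"
    by (intro filterlim_Pair filterlim_compose[OF filterlim_inverse_at_right_top])
  from filterlim_compose[OF full this]
  have "(\<lambda>j. prob (E j)) \<longlonglongrightarrow> 1"
    by (simp add: E_def)
  moreover have "prob (E j) \<le> prob (\<Union>j. E j)" for j
    by (intro finite_measure_mono) (auto simp: E_sets)
  ultimately have "1 \<le> prob (\<Union>j. E j)"
    by (intro tendsto_upperbound[of "\<lambda>j. prob (E j)"]) auto
  then have "AE w in M. w \<in> (\<Union>j. E j)"
    using prob_le_1[of "\<Union>j. E j"] by (intro AE_prob_1) linarith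
  then show ?thesis
  proof (rule AE_mp, intro AE_I2 impI)
    fix w assume "w \<in> (\<Union>j. E j)"
    then obtain j where "w \<in> E j" by blast
    then have "v (real (Suc j)) < norm (w 0)" "norm (w 0) < v (inverse (real (Suc j)))"
      by (simp_all add: E_def)
    moreover have "0 < inverse (real (Suc j))" "0 < real (Suc j)" by simp_all
    ultimately show "\<exists>s1>0. \<exists>s2>0. v s2 < norm (w 0) \<and> norm (w 0) < v s1" by blast
  qed
qed

lemma measure_Aq_Wint_cong:
  assumes "A \<in> sets M" "B \<in> sets M"
    and "AE w in M. \<forall>i. (shift ^^ i) w \<in> A \<longleftrightarrow> (shift ^^ i) w \<in> B"
  shows "measure M (Aq A q \<inter> Wint a b A) = measure M (Aq B q \<inter> Wint a b B)"
proof (rule measure_eq_AE)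
  show "AE w in M. w \<in> Aq A q \<inter> Wint a b A \<longleftrightarrow> w \<in> Aq B q \<inter> Wint a b B"
    using assms(3)
  proof eventually_elim
    case (elim w)
    moreover from elim[rule_format, of 0] have "w \<in> A \<longleftrightarrow> w \<in> B" by simp
    ultimately show ?case by (auto simp: Aq_def Wint_def)
  qed
qed (intro sets_Aq_Wint assms)+

lemma eventually_exceed_nonneg:
  assumes "(\<lambda>n. real n * prob (exceed (x n))) \<longlonglongrightarrow> \<tau>"
  shows "eventually (\<lambda>n. 0 \<le> x n) sequentially"
proof -
  have "(\<lambda>n. real n * prob (exceed (x n)) * inverse (real n)) \<longlonglongrightarrow> \<tau> * 0"
    by (intro tendsto_mult assms lim_inverse_n)
  moreover have "eventually (\<lambda>n. real n * prob (exceed (x n)) * inverse (real n) = prob (exceed (x n)))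
      sequentially"
    using eventually_gt_at_top[of 0] by eventually_elim simp
  ultimately have "(\<lambda>n. prob (exceed (x n))) \<longlonglongrightarrow> 0"
    by (simp add: Lim_transform_eventually)
  from order_tendstoD(2)[OF this, of 1]
  have "eventually (\<lambda>n. prob (exceed (x n)) < 1) sequentially" by simp
  then show ?thesis
  proof eventually_elim
    case (elim n)
    show ?case
    proof (rule ccontr)
      assume "\<not> 0 \<le> x n"
      then have "x n < norm (w 0)" for w :: "nat \<Rightarrow> 'a"
        using norm_ge_zero[of "w 0"] by linarith
      then have "exceed (x n) = space M" by (auto simp: exceed_def space_eq)
      with elim show False by (simp add: prob_space)
    qed
  qed
qed

lemma cond_D'_exceed:
  fixes u :: "nat \<Rightarrow> real \<Rightarrow> real" and q r :: "nat \<Rightarrow> nat"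
  assumes D': "cond_D' M u q r"
    and anti: "\<And>n. antimono_on {0<..} (u n)"
    and left_cont: "\<And>n. continuous (at_left \<tau>) (u n)"
    and full: "\<And>n. ((\<lambda>(s1, s2). measure M {w. u n s2 < norm (w 0) \<and> norm (w 0) < u n s1}) \<longlongrightarrow> 1)
                  (at_right 0 \<times>\<^sub>F at_top)"
    and "0 < \<tau>"
    and nonneg: "eventually (\<lambda>n. 0 \<le> u n \<tau>) sequentially"
  shows "(\<lambda>n. real n * measure M (Aq (exceed (u n \<tau>)) (q n) \<inter> Wint (q n + 1) (r n) (exceed (u n \<tau>))))
           \<longlonglongrightarrow> 0"
proof -
  define H where "H = {y::'a. 0 < norm y \<and> norm y < \<tau>}"
  have "Measurable.pred borel (\<lambda>y::'a. 0 < norm y \<and> norm y < \<tau>)" by measurable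
  then have H: "H \<in> sets borel" by (simp add: H_def Measurable.pred_def)
  define A where "A n = An1 (u n) 0 (\<lambda>_. H)" for n
  have "(\<lambda>n. real n * measure M (Aq (A n) (q n) \<inter> Wint (q n + 1) (r n) (A n))) \<longlonglongrightarrow> 0"
    using D'[unfolded cond_D'_def, rule_format, of 0 "\<lambda>_. H"] H by (simp add: A_def)
  moreover have "eventually (\<lambda>n. real n * measure M (Aq (A n) (q n) \<inter> Wint (q n + 1) (r n) (A n))
      = real n * measure M (Aq (exceed (u n \<tau>)) (q n) \<inter> Wint (q n + 1) (r n) (exceed (u n \<tau>))))
      sequentially"
    using nonneg
  proof eventually_elim
    case (elim n)
    then have "0 \<le> u n \<tau>" .
    have "AE w in M. u n \<tau> < norm (w 0) \<longleftrightarrow> normalise (u n) (w 0) \<in> H"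
      using AE_norm_between[OF full[of n]]
    proof eventually_elim
      case (elim w)
      then obtain s1 s2 where "0 < s1" "0 < s2" "u n s2 < norm (w 0)" "norm (w 0) < u n s1"
        by blast
      with exceeds_iff_norm_normalise[OF anti left_cont \<open>0 < \<tau>\<close> \<open>0 \<le> u n \<tau>\<close>, of s1 "w 0" s2]
      show ?case by (simp add: H_def)
    qed
    moreover have "Measurable.pred M (\<lambda>w. normalise (u n) (w 0) \<in> H)"
      using measurable_sets[OF _ H, of "\<lambda>w. normalise (u n) (w 0)" M]
      by (simp add: Measurable.pred_def space_eq vimage_def)
    then have "{w. u n \<tau> < norm (w 0) \<longleftrightarrow> normalise (u n) (w 0) \<in> H} \<in> sets M"
      by (intro sets_Collect_pred) measurable
    ultimately have "AE w in M. \<forall>i. u n \<tau> < norm (w i) \<longleftrightarrow> normalise (u n) (w i) \<in> H"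
      by (intro AE_all_coordinates)
    then have "AE w in M. \<forall>i. (shift ^^ i) w \<in> A n \<longleftrightarrow> (shift ^^ i) w \<in> exceed (u n \<tau>)"
      by eventually_elim (simp add: A_def An1_def exceed_def funpow_shift_apply)
    then show ?case
      by (simp add: measure_Aq_Wint_cong A_def sets_An1 H sets_exceed)
  qed
  ultimately show ?thesis by (rule Lim_transform_eventually)
qed

end

lemma ratio_tendsto_0_of_mult_smallo:
  fixes k t :: "nat \<Rightarrow> nat"
  assumes "(\<lambda>n. real (k n * t n)) \<in> o(\<lambda>n. real n)" and "filterlim t at_top sequentially"
  shows "(\<lambda>n. real (k n) / real n) \<longlonglongrightarrow> 0"
proof (rule Lim_null_comparison)
  have "eventually (\<lambda>n. 1 \<le> t n) sequentially"
    using assms(2) by (simp add: filterlim_at_top)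
  then show "eventually (\<lambda>n. norm (real (k n) / real n) \<le> real (k n * t n) / real n) sequentially"
  proof eventually_elim
    case (elim n)
    then have "k n * 1 \<le> k n * t n" by (intro mult_le_mono2)
    then have "real (k n) \<le> real (k n * t n)" by (metis mult_1_right of_nat_le_iff)
    then show ?case using divide_right_mono[of _ _ "real n"] by simp
  qed
  show "(\<lambda>n. real (k n * t n) / real n) \<longlonglongrightarrow> 0"
    using smalloD_tendsto[OF assms(1)] .
qed

lemma mult_div_ratio_tendsto_1:
  fixes k :: "nat \<Rightarrow> nat"
  assumes k_pos: "eventually (\<lambda>n. 0 < k n) sequentially"
    and k_small: "(\<lambda>n. real (k n) / real n) \<longlonglongrightarrow> 0"
  shows "(\<lambda>n. real (k n) * real (n div k n) / real n) \<longlonglongrightarrow> 1"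
proof (rule tendsto_sandwich)
  show "eventually (\<lambda>n. 1 - real (k n) / real n \<le> real (k n) * real (n div k n) / real n) sequentially"
    using k_pos eventually_gt_at_top[of 0]
  proof eventually_elim
    case (elim n)
    have "real n = real (k n) * real (n div k n) + real (n mod k n)"
      by (metis div_mult_mod_eq mult.commute of_nat_add of_nat_mult)
    moreover have "n mod k n < k n" using elim by simp
    ultimately have "real n - real (k n) \<le> real (k n) * real (n div k n)" by linarith
    then have "(real n - real (k n)) / real n \<le> real (k n) * real (n div k n) / real n"
      by (rule divide_right_mono) simp
    then show ?case using elim by (simp add: diff_divide_distrib)
  qed
  show "eventually (\<lambda>n. real (k n) * real (n div k n) / real n \<le> 1) sequentially"
    using eventually_gt_at_top[of 0]
  proof eventually_elim
    case (elim n)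
    have "k n * (n div k n) \<le> n" by (simp add: mult.commute)
    then have "real (k n) * real (n div k n) \<le> real n" by (metis of_nat_le_iff of_nat_mult)
    then show ?case using elim by simp
  qed
  show "(\<lambda>n. 1 - real (k n) / real n) \<longlonglongrightarrow> 1"
    using tendsto_diff[OF tendsto_const k_small, of 1] by simp
qed simp

lemma block_count_limits:
  fixes W Q U D :: "nat \<Rightarrow> real" and k r q :: "nat \<Rightarrow> nat"
  assumes nU: "(\<lambda>n. real n * U n) \<longlonglongrightarrow> \<tau>" and "\<tau> \<noteq> 0"
    and QU: "(\<lambda>n. Q n / U n) \<longlonglongrightarrow> \<theta>"
    and nD: "(\<lambda>n. real n * D n) \<longlonglongrightarrow> 0"
    and kr: "(\<lambda>n. real (k n) * real (r n) / real n) \<longlonglongrightarrow> 1"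
    and qr: "(\<lambda>n. real (q n) / real (r n)) \<longlonglongrightarrow> 0"
    and bound: "\<And>n. \<bar>W n - real (r n) * Q n\<bar> \<le> real (q n) * U n + real (r n) * D n"
  shows "(\<lambda>n. real (k n) * W n) \<longlonglongrightarrow> \<theta> * \<tau> \<and> (\<lambda>n. W n / (real (r n) * U n)) \<longlonglongrightarrow> \<theta>"
proof -
  have "eventually (\<lambda>n. 0 < real (k n) * real (r n) / real n) sequentially"
    using order_tendstoD(1)[OF kr, of 0] by simp
  then have pos: "eventually (\<lambda>n. 0 < n \<and> 0 < k n \<and> 0 < r n) sequentially"
    by eventually_elim (auto simp: zero_less_divide_iff zero_less_mult_iff)
  have "eventually (\<lambda>n. real n * U n \<noteq> 0) sequentially"
    using tendsto_imp_eventually_ne[OF nU \<open>\<tau> \<noteq> 0\<close>] .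
  then have U_nz: "eventually (\<lambda>n. U n \<noteq> 0) sequentially"
    by eventually_elim simp
  have "(\<lambda>n. (real (k n) * real (r n) / real n) * (real n * U n) * (Q n / U n)) \<longlonglongrightarrow> 1 * \<tau> * \<theta>"
    by (intro tendsto_mult kr nU QU)
  moreover have "eventually (\<lambda>n. (real (k n) * real (r n) / real n) * (real n * U n) * (Q n / U n)
      = real (k n) * (real (r n) * Q n)) sequentially"
    using pos U_nz by eventually_elim (simp add: field_simps)
  ultimately have main: "(\<lambda>n. real (k n) * (real (r n) * Q n)) \<longlonglongrightarrow> \<theta> * \<tau>"
    by (simp add: Lim_transform_eventually mult.commute)
  have err: "(\<lambda>n. real (k n) * (W n - real (r n) * Q n)) \<longlonglongrightarrow> 0"
  proof (rule Lim_null_comparison)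
    show "eventually (\<lambda>n. norm (real (k n) * (W n - real (r n) * Q n))
        \<le> (real (k n) * real (r n) / real n) * (real (q n) / real (r n)) * (real n * U n)
          + (real (k n) * real (r n) / real n) * (real n * D n)) sequentially"
      using pos
    proof eventually_elim
      case (elim n)
      have "norm (real (k n) * (W n - real (r n) * Q n)) \<le> real (k n) * (real (q n) * U n + real (r n) * D n)"
        using bound[of n] by (simp add: abs_mult mult_left_mono)
      also have "\<dots> = (real (k n) * real (r n) / real n) * (real (q n) / real (r n)) * (real n * U n)
          + (real (k n) * real (r n) / real n) * (real n * D n)"
        using elim by (simp add: field_simps)
      finally show ?case .
    qed
    show "(\<lambda>n. (real (k n) * real (r n) / real n) * (real (q n) / real (r n)) * (real n * U n)
          + (real (k n) * real (r n) / real n) * (real n * D n)) \<longlonglongrightarrow> 0"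
      using tendsto_add[OF tendsto_mult[OF tendsto_mult[OF kr qr] nU] tendsto_mult[OF kr nD]] by simp
  qed
  have kW: "(\<lambda>n. real (k n) * W n) \<longlonglongrightarrow> \<theta> * \<tau>"
    using tendsto_add[OF main err] by (simp add: algebra_simps)
  have "(\<lambda>n. (real (k n) * W n) / ((real (k n) * real (r n) / real n) * (real n * U n)))
      \<longlonglongrightarrow> (\<theta> * \<tau>) / (1 * \<tau>)"
    using \<open>\<tau> \<noteq> 0\<close> by (intro tendsto_divide kW tendsto_mult kr nU) simp
  moreover have "eventually (\<lambda>n. (real (k n) * W n) / ((real (k n) * real (r n) / real n) * (real n * U n))
      = W n / (real (r n) * U n)) sequentially"
    using pos by eventually_elim (simp add: field_simps)
  ultimately have "(\<lambda>n. W n / (real (r n) * U n)) \<longlonglongrightarrow> \<theta>"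
    using \<open>\<tau> \<noteq> 0\<close> by (simp add: Lim_transform_eventually)
  with kW show ?thesis ..
qed

theorem corollary3p5:
  fixes M :: "(nat \<Rightarrow> 'a::euclidean_space) measure"
    and u :: "nat \<Rightarrow> real \<Rightarrow> real"
    and k t q :: "nat \<Rightarrow> nat"
    and \<theta> :: real
  assumes prob: "prob_space M"
    and sets_M: "sets M = sets (\<Pi>\<^sub>M i\<in>(UNIV::nat set). (borel :: 'a measure))"
    and stationary: "\<forall>A\<in>sets M. measure M (shift -` A \<inter> space M) = measure M A"
    and u_antimono: "\<forall>n s s'. 0 < s \<longrightarrow> s \<le> s' \<longrightarrow> u n s' \<le> u n s"
    and u_leftcont: "\<forall>n s. 0 < s \<longrightarrow> continuous (at_left s) (u n)"
    and u_full: "\<forall>n. ((\<lambda>(s1, s2). measure M {w. u n s2 < norm (w 0) \<and> norm (w 0) < u n s1})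
                    \<longlongrightarrow> 1) (at_right 0 \<times>\<^sub>F at_top)"
    and u_norm: "\<forall>s>0. (\<lambda>n. real n * measure M (exceed (u n s))) \<longlonglongrightarrow> s"
    and k_lim: "filterlim k at_top sequentially"
    and t_lim: "filterlim t at_top sequentially"
    and r_lim: "filterlim (\<lambda>n. n div k n) at_top sequentially"
    and kt_small: "(\<lambda>n. real (k n * t n)) \<in> o(\<lambda>n. real n)"
    and q_small: "(\<lambda>n. real (q n)) \<in> o(\<lambda>n. real (n div k n))"
    and extremal_index: "\<forall>s>0. (\<lambda>n. measure M (exceed_q (u n s) (q n)) / measure M (exceed (u n s)))
                             \<longlonglongrightarrow> \<theta>"
    and D': "cond_D' M u q (\<lambda>n. n div k n)"
    and tau: "0 < \<tau>"
  shows "(\<lambda>n. real (k n) * measure M (Wmax (n div k n) (u n \<tau>))) \<longlonglongrightarrow> \<theta> * \<tau>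
       \<and> (\<lambda>n. measure M (Wmax (n div k n) (u n \<tau>))
               / (real (n div k n) * measure M (exceed (u n \<tau>)))) \<longlonglongrightarrow> \<theta>"
proof -
  interpret stationary_process M
    using prob sets_M stationary by (simp add: stationary_process_def stationary_process_axioms_def)
  define r where "r n = n div k n" for n
  have anti: "antimono_on {0<..} (u n)" for n
    using u_antimono by (auto intro!: monotone_onI)
  have nU: "(\<lambda>n. real n * prob (exceed (u n \<tau>))) \<longlonglongrightarrow> \<tau>"
    using u_norm tau by blast
  have nD: "(\<lambda>n. real n * prob (Aq (exceed (u n \<tau>)) (q n) \<inter> Wint (q n + 1) (r n) (exceed (u n \<tau>))))
      \<longlonglongrightarrow> 0"
    using u_leftcont tau unfolding r_def
    by (intro cond_D'_exceed[OF D' anti _ u_full[rule_format] tau eventually_exceed_nonneg[OF nU]])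
      simp
  have "eventually (\<lambda>n. 1 \<le> k n) sequentially"
    using k_lim by (simp add: filterlim_at_top)
  then have kr: "(\<lambda>n. real (k n) * real (r n) / real n) \<longlonglongrightarrow> 1"
    unfolding r_def using ratio_tendsto_0_of_mult_smallo[OF kt_small t_lim]
    by (intro mult_div_ratio_tendsto_1) (auto elim: eventually_mono)
  have qr: "(\<lambda>n. real (q n) / real (r n)) \<longlonglongrightarrow> 0"
    using smalloD_tendsto[OF q_small] by (simp add: r_def)
  from block_count_limits[OF nU _ extremal_index[rule_format, OF tau] nD kr qr Wmax_block_bound] tau
  show ?thesis by (simp add: r_def)
qed

end
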